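(* Let $R$ be a commutative Bézout ring and let $0\neq c\in R$. Consider: (1) for any $a,b\in R$ with $aR+bR=R$, there exist $r,s\in R$ such that $c=rs$ and $rR+sR=rR+aR=sR+bR=R$; (2) the ring $R/cR$ is clean. Then (1) implies (2). If moreover $R$ is an integral domain, then (1) and (2) are equivalent.
   Context: All rings are commutative with identity. A ring is Bézout if every finitely generated ideal is principal. A ring is clean if every element is the sum of an idempotent and a unit. *)

theory Defs
  imports "HOL-Algebra.Algebra"
begin

definition bezout_ring :: "('a, 'b) ring_scheme \<Rightarrow> bool" where
  "bezout_ring R \<longleftrightarrow> cring R \<and>
     (\<forall>S. finite S \<and> S \<subseteq> carrier R \<longrightarrow>
        (\<exists>d \<in> carrier R. genideal R S = cgenideal R d))"

definition clean_ring :: "('a, 'b) ring_scheme \<Rightarrow> bool" where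
  "clean_ring R \<longleftrightarrow>
     (\<forall>x \<in> carrier R. \<exists>e \<in> carrier R. \<exists>u \<in> Units R.
        e \<otimes>\<^bsub>R\<^esub> e = e \<and> x = e \<oplus>\<^bsub>R\<^esub> u)"

definition cond1 :: "('a, 'b) ring_scheme \<Rightarrow> 'a \<Rightarrow> bool" where
  "cond1 R c \<longleftrightarrow>
     (\<forall>a \<in> carrier R. \<forall>b \<in> carrier R.
        cgenideal R a <+>\<^bsub>R\<^esub> cgenideal R b = carrier R \<longrightarrow>
        (\<exists>r \<in> carrier R. \<exists>s \<in> carrier R. c = r \<otimes>\<^bsub>R\<^esub> s \<and>
            cgenideal R r <+>\<^bsub>R\<^esub> cgenideal R s = carrier R \<and>
            cgenideal R r <+>\<^bsub>R\<^esub> cgenideal R a = carrier R \<and>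
            cgenideal R s <+>\<^bsub>R\<^esub> cgenideal R b = carrier R))"

end

(* (1) implies (2): given x, apply (1) to the comaximal pair x, 1 - x to get c = r s with
   \<alpha> r + \<beta> s = 1. Then e = \<alpha> r is idempotent modulo r s, and x - e is congruent to x modulo r
   and to x - 1 modulo s, so it is a unit modulo r and modulo s, hence modulo r s.

   (2) implies (1) in a Bezout domain: given \<alpha> a + \<beta> b = 1, write \<alpha> a = e + u modulo c with
   e idempotent and u a unit, and let r, s generate the ideals (e, c) and (1 - e, c). These are
   comaximal and both divide c, so r s divides c; conversely r s lies in (e (1 - e), c) = (c).
   Hence c and r s are associates, and the unit can be absorbed into r. Finally
   1 - e = \<alpha> a (1 - e) u\<inverse> and e = - \<beta> b e u\<inverse> modulo c, which makes r comaximal with a and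
   s comaximal with b. *)

theory Submission
  imports Defs
begin

context cring
begin

lemma cgenideal_mem_iff:
  "x \<in> PIdl c \<longleftrightarrow> (\<exists>k\<in>carrier R. x = k \<otimes> c)"
  by (auto simp: cgenideal_def)

lemma mult_mem_cgenideal: "k \<in> carrier R \<Longrightarrow> k \<otimes> a \<in> PIdl a"
  by (auto simp: cgenideal_def)

lemma cgenideal_sum_mem_iff:
  "z \<in> PIdl a <+> PIdl b \<longleftrightarrow> (\<exists>x\<in>carrier R. \<exists>y\<in>carrier R. z = x \<otimes> a \<oplus> y \<otimes> b)"
  by (auto simp: set_add_defs cgenideal_def)

lemma cgenideal_sum_mem:
  assumes "a \<in> carrier R" "b \<in> carrier R"
  shows "a \<in> PIdl a <+> PIdl b" "b \<in> PIdl a <+> PIdl b"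
proof -
  have "a = \<one> \<otimes> a \<oplus> \<zero> \<otimes> b" "b = \<zero> \<otimes> a \<oplus> \<one> \<otimes> b"
    using assms by simp_all
  thus "a \<in> PIdl a <+> PIdl b" "b \<in> PIdl a <+> PIdl b"
    unfolding cgenideal_sum_mem_iff by (metis one_closed zero_closed)+
qed

lemma genideal_pair_eq_cgenideal_sum:
  assumes "a \<in> carrier R" "b \<in> carrier R"
  shows "Idl {a, b} = PIdl a <+> PIdl b"
proof
  have "ideal (PIdl a <+> PIdl b) R"
    using assms by (intro add_ideals cgenideal_ideal)
  thus "Idl {a, b} \<subseteq> PIdl a <+> PIdl b"
    using cgenideal_sum_mem[OF assms] by (intro genideal_minimal) auto
next
  have I: "ideal (Idl {a, b}) R"
    using assms by (intro genideal_ideal) auto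
  moreover have "a \<in> Idl {a, b}" "b \<in> Idl {a, b}"
    using assms genideal_self[of "{a, b}"] by auto
  ultimately have "PIdl a \<subseteq> Idl {a, b}" "PIdl b \<subseteq> Idl {a, b}"
    by (simp_all add: cgenideal_minimal)
  thus "PIdl a <+> PIdl b \<subseteq> Idl {a, b}"
    using assms ideal.axioms(1)[OF genideal_ideal, of "{a, b}"]
    by (auto simp: set_add_defs dest: additive_subgroup.a_closed)
qed

lemma bezout_ring_cgenideal_sum:
  assumes "bezout_ring R" "a \<in> carrier R" "b \<in> carrier R"
  obtains d where "d \<in> carrier R" "PIdl d = PIdl a <+> PIdl b"
  using assms genideal_pair_eq_cgenideal_sum unfolding bezout_ring_def
  by (metis empty_subsetI finite.emptyI finite_insert insert_subset)

lemma cgenideal_sum_mult_mem: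
  assumes "PIdl r = PIdl e <+> PIdl c" "PIdl s = PIdl f <+> PIdl c" "e \<otimes> f \<in> PIdl c"
    and "r \<in> carrier R" "s \<in> carrier R" "c \<in> carrier R" "e \<in> carrier R" "f \<in> carrier R"
  shows "r \<otimes> s \<in> PIdl c"
proof -
  obtain \<rho> \<rho>' \<sigma> \<sigma>' where coeffs: "\<rho> \<in> carrier R" "\<rho>' \<in> carrier R" "\<sigma> \<in> carrier R" "\<sigma>' \<in> carrier R"
    and r: "r = \<rho> \<otimes> e \<oplus> \<rho>' \<otimes> c" and s: "s = \<sigma> \<otimes> f \<oplus> \<sigma>' \<otimes> c"
    using assms(1,2) cgenideal_self[OF assms(4)] cgenideal_self[OF assms(5)]
    by (auto simp: cgenideal_sum_mem_iff)
  have "r \<otimes> s = (\<rho> \<otimes> \<sigma>) \<otimes> (e \<otimes> f) \<oplus> (\<rho> \<otimes> \<sigma>' \<otimes> e \<oplus> \<rho>' \<otimes> \<sigma> \<otimes> f \<oplus> \<rho>' \<otimes> \<sigma>' \<otimes> c) \<otimes> c"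
    unfolding r s using coeffs assms(6-8) by algebra
  moreover interpret C: ideal "PIdl c" R
    using cgenideal_ideal[OF assms(6)] .
  have "(\<rho> \<otimes> \<sigma>) \<otimes> (e \<otimes> f) \<oplus> (\<rho> \<otimes> \<sigma>' \<otimes> e \<oplus> \<rho>' \<otimes> \<sigma> \<otimes> f \<oplus> \<rho>' \<otimes> \<sigma>' \<otimes> c) \<otimes> c \<in> PIdl c"
    by (rule C.a_closed; rule C.I_l_closed) (use coeffs assms(3,6-8) cgenideal_self in auto)
  ultimately show ?thesis
    by simp
qed

definition comaximal :: "'a \<Rightarrow> 'a \<Rightarrow> bool" where
  "comaximal a b \<longleftrightarrow> PIdl a <+> PIdl b = carrier R"

lemma comaximal_iff:
  assumes "a \<in> carrier R" "b \<in> carrier R"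
  shows "comaximal a b \<longleftrightarrow> (\<exists>x\<in>carrier R. \<exists>y\<in>carrier R. x \<otimes> a \<oplus> y \<otimes> b = \<one>)"
proof -
  have "ideal (PIdl a <+> PIdl b) R"
    using assms by (intro add_ideals cgenideal_ideal)
  hence "comaximal a b \<longleftrightarrow> \<one> \<in> PIdl a <+> PIdl b"
    unfolding comaximal_def using ideal.one_imp_carrier by blast
  thus ?thesis
    unfolding cgenideal_sum_mem_iff by metis
qed

lemma comaximalI:
  assumes "x \<in> carrier R" "y \<in> carrier R" "a \<in> carrier R" "b \<in> carrier R"
    and "x \<otimes> a \<oplus> y \<otimes> b = \<one>"
  shows "comaximal a b"
  using assms comaximal_iff by blast

lemma comaximalE:
  assumes "comaximal a b" "a \<in> carrier R" "b \<in> carrier R"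
  obtains x y where "x \<in> carrier R" "y \<in> carrier R" "x \<otimes> a \<oplus> y \<otimes> b = \<one>"
  using assms comaximal_iff by blast

lemma comaximalI_mem:
  assumes "x \<in> PIdl a" "y \<in> PIdl b" "x \<oplus> y = \<one>" "a \<in> carrier R" "b \<in> carrier R"
  shows "comaximal a b"
  using assms comaximalI by (auto simp: cgenideal_mem_iff)

lemma comaximal_commute:
  assumes "a \<in> carrier R" "b \<in> carrier R"
  shows "comaximal a b \<longleftrightarrow> comaximal b a"
  using assms unfolding comaximal_iff[OF assms] comaximal_iff[OF assms(2,1)]
  by (metis a_comm m_closed)

lemma comaximal_add_multiple:
  assumes "comaximal a b" "a \<in> carrier R" "b \<in> carrier R" "k \<in> carrier R"
  shows "comaximal (a \<oplus> k \<otimes> b) b"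
proof -
  obtain x y where xy: "x \<in> carrier R" "y \<in> carrier R" "x \<otimes> a \<oplus> y \<otimes> b = \<one>"
    using assms comaximalE by blast
  have "x \<otimes> (a \<oplus> k \<otimes> b) \<oplus> (y \<ominus> x \<otimes> k) \<otimes> b = x \<otimes> a \<oplus> y \<otimes> b"
    using assms xy(1,2) by algebra
  thus ?thesis
    using assms xy by (intro comaximalI[of x "y \<ominus> x \<otimes> k"]) auto
qed

lemma comaximal_uminus:
  assumes "comaximal a b" "a \<in> carrier R" "b \<in> carrier R"
  shows "comaximal (\<ominus> a) b"
proof -
  obtain x y where xy: "x \<in> carrier R" "y \<in> carrier R" "x \<otimes> a \<oplus> y \<otimes> b = \<one>"
    using assms comaximalE by blast
  have "(\<ominus> x) \<otimes> (\<ominus> a) \<oplus> y \<otimes> b = x \<otimes> a \<oplus> y \<otimes> b"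
    using assms xy(1,2) by algebra
  thus ?thesis
    using assms xy by (intro comaximalI[of "\<ominus> x" y]) auto
qed

lemma comaximal_Units_mult:
  assumes "comaximal r a" "t \<in> Units R" "r \<in> carrier R" "a \<in> carrier R"
  shows "comaximal (t \<otimes> r) a"
proof -
  obtain x y where xy: "x \<in> carrier R" "y \<in> carrier R" "x \<otimes> r \<oplus> y \<otimes> a = \<one>"
    using assms comaximalE by blast
  have "(x \<otimes> inv t) \<otimes> (t \<otimes> r) = x \<otimes> (inv t \<otimes> t) \<otimes> r"
    using assms(3) xy(1) Units_inv_closed[OF assms(2)] Units_closed[OF assms(2)] by algebra
  also have "\<dots> = x \<otimes> r"
    using assms xy by simp
  finally have "(x \<otimes> inv t) \<otimes> (t \<otimes> r) = x \<otimes> r" .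
  thus ?thesis
    using assms xy by (intro comaximalI[of "x \<otimes> inv t" y]) auto
qed

lemma comaximal_mult:
  assumes "comaximal a b" "comaximal a c" "a \<in> carrier R" "b \<in> carrier R" "c \<in> carrier R"
  shows "comaximal a (b \<otimes> c)"
proof -
  obtain x y where xy: "x \<in> carrier R" "y \<in> carrier R" "x \<otimes> a \<oplus> y \<otimes> b = \<one>"
    using assms comaximalE by blast
  obtain x' y' where xy': "x' \<in> carrier R" "y' \<in> carrier R" "x' \<otimes> a \<oplus> y' \<otimes> c = \<one>"
    using assms comaximalE by blast
  have "(x \<otimes> x' \<otimes> a \<oplus> x \<otimes> y' \<otimes> c \<oplus> y \<otimes> b \<otimes> x') \<otimes> a \<oplus> (y \<otimes> y') \<otimes> (b \<otimes> c)
        = (x \<otimes> a \<oplus> y \<otimes> b) \<otimes> (x' \<otimes> a \<oplus> y' \<otimes> c)"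
    using assms xy(1,2) xy'(1,2) by algebra
  also have "\<dots> = \<one>"
    using xy xy' by simp
  finally show ?thesis
    using assms xy xy' by (intro comaximalI) auto
qed

lemma cgenideal_mem_mult_if_comaximal:
  assumes "c \<in> PIdl r" "c \<in> PIdl s" "comaximal r s" "r \<in> carrier R" "s \<in> carrier R"
  shows "c \<in> PIdl (r \<otimes> s)"
proof -
  obtain x y where xy: "x \<in> carrier R" "y \<in> carrier R" "x \<otimes> r \<oplus> y \<otimes> s = \<one>"
    using assms comaximalE by blast
  obtain k l where kl: "k \<in> carrier R" "l \<in> carrier R" "c = k \<otimes> r" "c = l \<otimes> s"
    using assms(1,2) by (auto simp: cgenideal_mem_iff)
  have c: "c \<in> carrier R"
    using kl assms by simp
  have "c = (x \<otimes> r \<oplus> y \<otimes> s) \<otimes> c"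
    using xy(3) c by simp
  also have "\<dots> = x \<otimes> r \<otimes> c \<oplus> y \<otimes> s \<otimes> c"
    using xy(1,2) c assms by algebra
  also have "\<dots> = x \<otimes> r \<otimes> (l \<otimes> s) \<oplus> y \<otimes> s \<otimes> (k \<otimes> r)"
    using kl(3,4) by metis
  also have "\<dots> = (x \<otimes> l \<oplus> y \<otimes> k) \<otimes> (r \<otimes> s)"
    using xy(1,2) kl(1,2) assms(4,5) by algebra
  finally show ?thesis
    using xy kl by (auto simp: cgenideal_mem_iff)
qed

lemma comaximal_iff_invertible_mod:
  assumes "u \<in> carrier R" "c \<in> carrier R"
  shows "comaximal u c \<longleftrightarrow> (\<exists>v\<in>carrier R. u \<otimes> v \<ominus> \<one> \<in> PIdl c)"
proof
  assume "comaximal u c"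
  then obtain v y where vy: "v \<in> carrier R" "y \<in> carrier R" "v \<otimes> u \<oplus> y \<otimes> c = \<one>"
    using assms comaximalE by blast
  have "u \<otimes> v \<ominus> \<one> = u \<otimes> v \<ominus> (v \<otimes> u \<oplus> y \<otimes> c)"
    using vy by simp
  also have "\<dots> = (\<ominus> y) \<otimes> c"
    using assms vy(1,2) by algebra
  finally show "\<exists>v\<in>carrier R. u \<otimes> v \<ominus> \<one> \<in> PIdl c"
    using vy by (auto simp: cgenideal_mem_iff)
next
  assume "\<exists>v\<in>carrier R. u \<otimes> v \<ominus> \<one> \<in> PIdl c"
  then obtain v k where vk: "v \<in> carrier R" "k \<in> carrier R" "u \<otimes> v \<ominus> \<one> = k \<otimes> c"
    by (auto simp: cgenideal_mem_iff)
  have "v \<otimes> u \<oplus> (\<ominus> k) \<otimes> c = \<one> \<oplus> (u \<otimes> v \<ominus> \<one> \<ominus> k \<otimes> c)"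
    using assms vk(1,2) by algebra
  also have "\<dots> = \<one>"
    using assms vk by simp
  finally show "comaximal u c"
    using assms vk by (intro comaximalI) auto
qed

lemma cond1_iff_comaximal:
  "cond1 R c \<longleftrightarrow>
     (\<forall>a\<in>carrier R. \<forall>b\<in>carrier R. comaximal a b \<longrightarrow>
        (\<exists>r\<in>carrier R. \<exists>s\<in>carrier R. c = r \<otimes> s \<and>
           comaximal r s \<and> comaximal r a \<and> comaximal s b))"
  by (simp add: cond1_def comaximal_def)

lemma FactRing_cgenideal_carrier:
  "carrier (R Quot PIdl c) = (+>) (PIdl c) ` carrier R"
  by (auto simp: FactRing_def A_RCOSETS_def RCOSETS_def a_r_coset_def)

lemma rcos_cgenideal_eq_iff:
  assumes "c \<in> carrier R" "x \<in> carrier R" "y \<in> carrier R"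
  shows "PIdl c +> x = PIdl c +> y \<longleftrightarrow> x \<ominus> y \<in> PIdl c"
  using quotient_eq_iff_same_a_r_cos[OF cgenideal_ideal assms(2,3)] assms(1) by simp

lemma rcos_cgenideal_idempotent_iff:
  assumes "c \<in> carrier R" "e \<in> carrier R"
  shows "(PIdl c +> e) \<otimes>\<^bsub>R Quot PIdl c\<^esub> (PIdl c +> e) = PIdl c +> e \<longleftrightarrow> e \<otimes> e \<ominus> e \<in> PIdl c"
  using assms ring_hom_mult[OF ideal.rcos_ring_hom[OF cgenideal_ideal], symmetric]
  by (simp add: rcos_cgenideal_eq_iff)

lemma rcos_cgenideal_Units_iff:
  assumes "c \<in> carrier R" "u \<in> carrier R"
  shows "PIdl c +> u \<in> Units (R Quot PIdl c) \<longleftrightarrow> comaximal u c"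
proof -
  let ?Q = "R Quot PIdl c"
  interpret Q: cring ?Q
    using ideal.quotient_is_cring[OF cgenideal_ideal[OF assms(1)] is_cring] .
  have hom: "(+>) (PIdl c) \<in> ring_hom R ?Q"
    using ideal.rcos_ring_hom[OF cgenideal_ideal[OF assms(1)]] .
  have "PIdl c +> u \<in> Units ?Q \<longleftrightarrow>
        (\<exists>v\<in>carrier R. (PIdl c +> u) \<otimes>\<^bsub>?Q\<^esub> (PIdl c +> v) = \<one>\<^bsub>?Q\<^esub>)"
    using assms ring_hom_closed[OF hom] Q.m_comm
    by (auto simp: Units_def FactRing_cgenideal_carrier)
  also have "\<dots> \<longleftrightarrow> (\<exists>v\<in>carrier R. u \<otimes> v \<ominus> \<one> \<in> PIdl c)"
    using assms ring_hom_mult[OF hom] ring_hom_one[OF hom]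
    by (auto simp: rcos_cgenideal_eq_iff[symmetric])
  finally show ?thesis
    using comaximal_iff_invertible_mod assms by simp
qed

lemma clean_FactRing_cgenideal_iff:
  assumes "c \<in> carrier R"
  shows "clean_ring (R Quot PIdl c) \<longleftrightarrow>
    (\<forall>x\<in>carrier R. \<exists>e\<in>carrier R. \<exists>u\<in>carrier R.
       e \<otimes> e \<ominus> e \<in> PIdl c \<and> comaximal u c \<and> x \<ominus> (e \<oplus> u) \<in> PIdl c)"
proof -
  let ?Q = "R Quot PIdl c" and ?h = "(+>) (PIdl c)"
  have hom: "?h \<in> ring_hom R ?Q"
    using ideal.rcos_ring_hom[OF cgenideal_ideal[OF assms]] .
  have units: "\<And>P. (\<exists>U\<in>Units ?Q. P U) \<longleftrightarrow> (\<exists>u\<in>carrier R. ?h u \<in> Units ?Q \<and> P (?h u))"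
    unfolding Units_def FactRing_cgenideal_carrier by auto
  show ?thesis
    unfolding clean_ring_def units FactRing_cgenideal_carrier
    using assms ring_hom_add[OF hom, symmetric]
    by (simp add: rcos_cgenideal_Units_iff rcos_cgenideal_idempotent_iff rcos_cgenideal_eq_iff)
      blast
qed

lemma idempotent_unit_split_mod_comaximal_product:
  assumes "comaximal r s" "comaximal x r" "comaximal (\<one> \<ominus> x) s"
    and "r \<in> carrier R" "s \<in> carrier R" "x \<in> carrier R"
  obtains e where "e \<in> carrier R" "e \<otimes> e \<ominus> e \<in> PIdl (r \<otimes> s)" "comaximal (x \<ominus> e) (r \<otimes> s)"
proof -
  obtain \<alpha> \<beta> where ab: "\<alpha> \<in> carrier R" "\<beta> \<in> carrier R" "\<alpha> \<otimes> r \<oplus> \<beta> \<otimes> s = \<one>"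
    using assms comaximalE by blast
  note carr = assms(4-6) ab(1,2)
  let ?e = "\<alpha> \<otimes> r"
  have "?e \<otimes> ?e \<ominus> ?e = ?e \<otimes> ?e \<ominus> ?e \<otimes> (\<alpha> \<otimes> r \<oplus> \<beta> \<otimes> s)"
    using ab carr by simp
  also have "\<dots> = (\<ominus> (\<alpha> \<otimes> \<beta>)) \<otimes> (r \<otimes> s)"
    using carr by algebra
  finally have idem: "?e \<otimes> ?e \<ominus> ?e \<in> PIdl (r \<otimes> s)"
    using carr by (auto simp: cgenideal_mem_iff)
  have "x \<ominus> ?e = x \<oplus> (\<ominus> \<alpha>) \<otimes> r"
    using carr by algebra
  hence unit_r: "comaximal (x \<ominus> ?e) r"
    using assms carr by (simp add: comaximal_add_multiple)
  have "x \<ominus> ?e = \<ominus> ((\<one> \<ominus> x) \<oplus> (\<ominus> \<beta>) \<otimes> s) \<oplus> (\<one> \<ominus> (\<alpha> \<otimes> r \<oplus> \<beta> \<otimes> s))"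
    using carr by algebra
  hence "x \<ominus> ?e = \<ominus> ((\<one> \<ominus> x) \<oplus> (\<ominus> \<beta>) \<otimes> s)"
    using ab carr by simp
  hence unit_s: "comaximal (x \<ominus> ?e) s"
    using assms carr by (simp add: comaximal_add_multiple comaximal_uminus)
  show ?thesis
    using that[of ?e] idem comaximal_mult[OF unit_r unit_s] carr by simp
qed

lemma clean_FactRing_if_cond1:
  assumes "c \<in> carrier R" "cond1 R c"
  shows "clean_ring (R Quot PIdl c)"
  unfolding clean_FactRing_cgenideal_iff[OF assms(1)]
proof
  fix x assume x: "x \<in> carrier R"
  have "comaximal x (\<one> \<ominus> x)"
    using x by (intro comaximalI[of \<one> \<one>]) (auto, algebra)
  then obtain r s where rs: "r \<in> carrier R" "s \<in> carrier R" "c = r \<otimes> s"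
    "comaximal r s" "comaximal r x" "comaximal s (\<one> \<ominus> x)"
    using assms x minus_closed[OF one_closed x] unfolding cond1_iff_comaximal by blast
  then obtain e where e: "e \<in> carrier R" "e \<otimes> e \<ominus> e \<in> PIdl c" "comaximal (x \<ominus> e) c"
    using idempotent_unit_split_mod_comaximal_product x
    by (metis comaximal_commute minus_closed one_closed)
  have "x \<ominus> (e \<oplus> (x \<ominus> e)) = \<zero> \<otimes> c"
    using x e(1) assms(1) by algebra
  hence "x \<ominus> (e \<oplus> (x \<ominus> e)) \<in> PIdl c"
    by (simp add: mult_mem_cgenideal)
  thus "\<exists>e\<in>carrier R. \<exists>u\<in>carrier R.
          e \<otimes> e \<ominus> e \<in> PIdl c \<and> comaximal u c \<and> x \<ominus> (e \<oplus> u) \<in> PIdl c"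
    using e x by blast
qed

lemma complements_of_idempotent_unit_split:
  assumes "e \<otimes> e \<ominus> e \<in> PIdl c" "comaximal u c" "x \<ominus> (e \<oplus> u) \<in> PIdl c"
    and "c \<in> carrier R" "e \<in> carrier R" "u \<in> carrier R" "x \<in> carrier R"
  obtains w w' where "w \<in> carrier R" "w' \<in> carrier R"
    "(\<one> \<ominus> e) \<ominus> w \<otimes> x \<in> PIdl c" "e \<ominus> w' \<otimes> (\<one> \<ominus> x) \<in> PIdl c"
proof -
  (* modulo c: 1 - e = x (1 - e) v and e = - (1 - x) e v, where v inverts u and e (1 - e) = 0 *)
  obtain v where v: "v \<in> carrier R" "u \<otimes> v \<ominus> \<one> \<in> PIdl c"
    using assms comaximal_iff_invertible_mod by blast
  interpret C: ideal "PIdl c" R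
    using cgenideal_ideal[OF assms(4)] .
  note carr = assms(4-7) v(1)
  have complement: "(\<one> \<ominus> e) \<ominus> ((\<one> \<ominus> e) \<otimes> v) \<otimes> x =
        (\<ominus> (\<one> \<ominus> e)) \<otimes> (u \<otimes> v \<ominus> \<one>) \<oplus> (\<ominus> ((\<one> \<ominus> e) \<otimes> v)) \<otimes> (x \<ominus> (e \<oplus> u))
          \<oplus> v \<otimes> (e \<otimes> e \<ominus> e)"
    using carr by algebra
  have idempotent: "e \<ominus> (\<ominus> (e \<otimes> v)) \<otimes> (\<one> \<ominus> x) =
        (\<ominus> e) \<otimes> (u \<otimes> v \<ominus> \<one>) \<oplus> (\<ominus> v) \<otimes> (e \<otimes> e \<ominus> e) \<oplus> (\<ominus> (e \<otimes> v)) \<otimes> (x \<ominus> (e \<oplus> u))"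
    using carr by algebra
  have "(\<one> \<ominus> e) \<ominus> ((\<one> \<ominus> e) \<otimes> v) \<otimes> x \<in> PIdl c"
    unfolding complement
    by (intro C.a_closed C.I_l_closed) (use carr assms(1,3) v(2) in auto)
  moreover have "e \<ominus> (\<ominus> (e \<otimes> v)) \<otimes> (\<one> \<ominus> x) \<in> PIdl c"
    unfolding idempotent
    by (intro C.a_closed C.I_l_closed) (use carr assms(1,3) v(2) in auto)
  ultimately show ?thesis
    using carr by (intro that[of "(\<one> \<ominus> e) \<otimes> v" "\<ominus> (e \<otimes> v)"]) auto
qed

lemma comaximal_if_complement_mod:
  assumes "PIdl r = PIdl e <+> PIdl c" "f \<ominus> w \<otimes> a \<in> PIdl c" "e \<oplus> f = \<one>"
    and "r \<in> carrier R" "c \<in> carrier R" "e \<in> carrier R" "f \<in> carrier R"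
      "w \<in> carrier R" "a \<in> carrier R"
  shows "comaximal r a"
proof -
  interpret I: ideal "PIdl r" R
    using cgenideal_ideal[OF assms(4)] .
  have "e \<in> PIdl r" "c \<in> PIdl r"
    unfolding assms(1) using cgenideal_sum_mem assms(5,6) by simp_all
  hence "e \<oplus> (f \<ominus> w \<otimes> a) \<in> PIdl r"
    using assms(2) cgenideal_minimal[OF I.is_ideal] by blast
  moreover have "w \<otimes> a \<in> PIdl a"
    using assms(8) by (rule mult_mem_cgenideal)
  moreover have "e \<oplus> (f \<ominus> w \<otimes> a) \<oplus> w \<otimes> a = e \<oplus> f"
    using assms(6-9) by algebra
  ultimately show ?thesis
    using comaximalI_mem assms(3,4,9) by simp
qed

lemma same_cgenideal_UnitsE:
  assumes "domain R" "PIdl a = PIdl b" "a \<in> carrier R" "b \<in> carrier R"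
  obtains t where "t \<in> Units R" "a = t \<otimes> b"
proof -
  have "a \<sim> b"
    using assms(2-4) associated_iff_same_ideal by simp
  thus ?thesis
    using that domain.ring_associated_iff[OF assms(1,3,4)] by blast
qed

lemma comaximal_factorization_from_idempotent:
  assumes "bezout_ring R" "domain R"
    and "e \<otimes> e \<ominus> e \<in> PIdl c" "(\<one> \<ominus> e) \<ominus> w \<otimes> a \<in> PIdl c" "e \<ominus> w' \<otimes> b \<in> PIdl c"
    and "c \<in> carrier R" "e \<in> carrier R" "w \<in> carrier R" "w' \<in> carrier R"
      "a \<in> carrier R" "b \<in> carrier R"
  obtains r s where "r \<in> carrier R" "s \<in> carrier R" "c = r \<otimes> s"
    "comaximal r s" "comaximal r a" "comaximal s b"
proof -
  note carr = assms(6-11)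
  have f: "\<one> \<ominus> e \<in> carrier R"
    using carr by simp
  obtain r where r: "r \<in> carrier R" "PIdl r = PIdl e <+> PIdl c"
    using bezout_ring_cgenideal_sum[OF assms(1) carr(2,1)] .
  obtain s where s: "s \<in> carrier R" "PIdl s = PIdl (\<one> \<ominus> e) <+> PIdl c"
    using bezout_ring_cgenideal_sum[OF assms(1) f carr(1)] .
  have in_r: "e \<in> PIdl r" "c \<in> PIdl r"
    unfolding r(2) using cgenideal_sum_mem carr by simp_all
  have in_s: "\<one> \<ominus> e \<in> PIdl s" "c \<in> PIdl s"
    unfolding s(2) using cgenideal_sum_mem carr by simp_all
  have rs: "comaximal r s"
    by (rule comaximalI_mem[OF in_r(1) in_s(1)]) (use carr r s in algebra)+
  have ra: "comaximal r a"
    by (rule comaximal_if_complement_mod[OF r(2) assms(4)]) (use carr r f in algebra)+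
  have sb: "comaximal s b"
    by (rule comaximal_if_complement_mod[OF s(2) assms(5)]) (use carr s f in algebra)+
  have "e \<otimes> (\<one> \<ominus> e) = (\<ominus> \<one>) \<otimes> (e \<otimes> e \<ominus> e)"
    using carr by algebra
  hence "e \<otimes> (\<one> \<ominus> e) \<in> PIdl c"
    using assms(3) carr ideal.I_l_closed[OF cgenideal_ideal] by simp
  hence "r \<otimes> s \<in> PIdl c"
    using cgenideal_sum_mult_mem r s carr by simp
  moreover have "c \<in> PIdl (r \<otimes> s)"
    using cgenideal_mem_mult_if_comaximal in_r(2) in_s(2) rs r s by simp
  ultimately have "PIdl c = PIdl (r \<otimes> s)"
    using carr r s by (meson cgenideal_minimal cgenideal_ideal m_closed subset_antisym)
  then obtain t where t: "t \<in> Units R" "c = t \<otimes> (r \<otimes> s)"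
    using same_cgenideal_UnitsE[OF assms(2)] carr r s by blast
  show ?thesis
  proof (rule that)
    show "c = (t \<otimes> r) \<otimes> s"
      using t(2) r(1) s(1) Units_closed[OF t(1)] by (simp add: m_assoc)
    show "comaximal (t \<otimes> r) s" "comaximal (t \<otimes> r) a"
      using comaximal_Units_mult rs ra t r s carr by simp_all
  qed (use t r s sb in auto)
qed

lemma cond1_if_clean_FactRing:
  assumes "bezout_ring R" "domain R" "c \<in> carrier R" "clean_ring (R Quot PIdl c)"
  shows "cond1 R c"
  unfolding cond1_iff_comaximal
proof (intro ballI impI)
  fix a b assume a: "a \<in> carrier R" and b: "b \<in> carrier R" and "comaximal a b"
  then obtain \<alpha> \<beta> where ab: "\<alpha> \<in> carrier R" "\<beta> \<in> carrier R" "\<alpha> \<otimes> a \<oplus> \<beta> \<otimes> b = \<one>"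
    using comaximalE by blast
  have x: "\<alpha> \<otimes> a \<in> carrier R"
    using ab a by simp
  obtain e u where eu: "e \<in> carrier R" "u \<in> carrier R" "e \<otimes> e \<ominus> e \<in> PIdl c"
    "comaximal u c" "\<alpha> \<otimes> a \<ominus> (e \<oplus> u) \<in> PIdl c"
    using assms(3,4) x by (auto simp: clean_FactRing_cgenideal_iff)
  obtain w w' where w: "w \<in> carrier R" "w' \<in> carrier R"
    "(\<one> \<ominus> e) \<ominus> w \<otimes> (\<alpha> \<otimes> a) \<in> PIdl c" "e \<ominus> w' \<otimes> (\<one> \<ominus> \<alpha> \<otimes> a) \<in> PIdl c"
    using complements_of_idempotent_unit_split[OF eu(3-5) assms(3) eu(1,2) x] .
  have "\<one> \<ominus> \<alpha> \<otimes> a = (\<alpha> \<otimes> a \<oplus> \<beta> \<otimes> b) \<ominus> \<alpha> \<otimes> a"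
    using ab by simp
  also have "\<dots> = \<beta> \<otimes> b"
    using ab(1,2) a b by algebra
  finally have "e \<ominus> (w' \<otimes> \<beta>) \<otimes> b \<in> PIdl c"
    using w(2,4) ab(2) b by (simp add: m_assoc)
  moreover have "(\<one> \<ominus> e) \<ominus> (w \<otimes> \<alpha>) \<otimes> a \<in> PIdl c"
    using w(1,3) ab(1) a by (simp add: m_assoc)
  ultimately show "\<exists>r\<in>carrier R. \<exists>s\<in>carrier R. c = r \<otimes> s \<and>
      comaximal r s \<and> comaximal r a \<and> comaximal s b"
    using comaximal_factorization_from_idempotent[OF assms(1,2) eu(3)] assms(3) eu(1) w(1,2) ab(1,2) a b
    by (metis m_closed)
qed

end

theorem lemma3p6:
  fixes R (structure) and c
  assumes "bezout_ring R"
    and "c \<in> carrier R" and "c \<noteq> \<zero>\<^bsub>R\<^esub>"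
  shows "(cond1 R c \<longrightarrow> clean_ring (R Quot (cgenideal R c))) \<and>
         (domain R \<longrightarrow> (cond1 R c \<longleftrightarrow> clean_ring (R Quot (cgenideal R c))))"
proof -
  interpret cring R
    using assms(1) by (simp add: bezout_ring_def)
  show ?thesis
    using clean_FactRing_if_cond1[OF assms(2)] cond1_if_clean_FactRing[OF assms(1) _ assms(2)]
    by blast
qed

end
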